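(* Let $c=(c_1,\dots,c_p)$ with $c_1\ge\cdots\ge c_p>0$ and $C=\operatorname{diag}(c_1,\dots,c_p)$. If $R\in M_p$ satisfies $\|R\|_c=\operatorname{tr}(CR)$, where $\|R\|_c=\sum_{j=1}^p c_js_j(R)$, then $R$ is positive semidefinite.
   Context: $M_p$ is the set of $p\times p$ complex matrices and $s_1(R)\ge\cdots\ge s_p(R)$ are the singular values of $R$. *)

theory Defs
  imports "Jordan_Normal_Form.Schur_Decomposition" "Jordan_Normal_Form.Char_Poly"
begin

definition mat_trace :: "complex mat \<Rightarrow> complex" where
  "mat_trace A = (\<Sum>i<dim_row A. A $$ (i, i))"

(* singular values s_1(R) >= ... >= s_p(R), as a list indexed from 0:
   the square roots of the eigenvalues (with algebraic multiplicity) of R^* R,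
   sorted in non-increasing order. The eigenvalues of R^* R are real and
   nonnegative, so taking the real part loses nothing. *)
definition singular_values :: "complex mat \<Rightarrow> real list" where
  "singular_values R =
     rev (sorted_list_of_multiset
            (image_mset (\<lambda>z. sqrt (Re z)) (proots (char_poly (mat_adjoint R * R)))))"

(* c-norm: ||R||_c = sum_{j=1}^p c_j s_j(R)  (indices shifted to 0..p-1) *)
definition c_norm :: "nat \<Rightarrow> (nat \<Rightarrow> real) \<Rightarrow> complex mat \<Rightarrow> real" where
  "c_norm p c R = (\<Sum>j<p. c j * singular_values R ! j)"

definition diagC :: "nat \<Rightarrow> (nat \<Rightarrow> real) \<Rightarrow> complex mat" where
  "diagC p c = mat_diag p (\<lambda>j. complex_of_real (c j))"

definition psd_mat :: "nat \<Rightarrow> complex mat \<Rightarrow> bool" where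
  "psd_mat p R \<longleftrightarrow> R \<in> carrier_mat p p \<and> mat_adjoint R = R \<and>
     (\<forall>x \<in> carrier_vec p. Re ((R *\<^sub>v x) \<bullet>c x) \<ge> 0 \<and> Im ((R *\<^sub>v x) \<bullet>c x) = 0)"

end

(*
  Write R = W V^* with V unitary and V^* (R^* R) V diagonal: the columns w_j of W = R V are then
  orthogonal, of lengths the singular values s_j.  Since Re R_ii = Re (sum_j W_ij cnj V_ij), an AM-GM
  bound on each column together with Bessel's inequality for the normalised columns of W gives
  Ky Fan's inequality Re (R_11 + ... + R_kk) <= s_1 + ... + s_k.  So x_i = s_i - Re R_ii has
  nonnegative partial sums; as sum_i c_i x_i = 0 with c nonincreasing and positive, Abel summation
  forces sum_i x_i = 0.  Then Re <w_j, v_j> = |w_j| |v_j| for every j, hence w_j = s_j v_j and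
  R = V diag(s) V^* is positive semidefinite.
*)

theory Submission
  imports Defs
begin

section \<open>Adjoints, unitary matrices and projections\<close>

definition unitary_mat :: "nat \<Rightarrow> complex mat \<Rightarrow> bool" where
  "unitary_mat n U \<longleftrightarrow> U \<in> carrier_mat n n \<and> mat_adjoint U * U = 1\<^sub>m n"

lemma dim_row_mat_adjoint [simp]: "dim_row (mat_adjoint (A :: complex mat)) = dim_col A"
  and dim_col_mat_adjoint [simp]: "dim_col (mat_adjoint A) = dim_row A"
  by (simp_all add: mat_adjoint_def mat_of_rows_def)

lemma index_mat_adjoint [simp]:
  "i < dim_col A \<Longrightarrow> j < dim_row A \<Longrightarrow> mat_adjoint A $$ (i, j) = cnj (A $$ (j, i))"
  by (simp add: mat_adjoint_def mat_of_rows_def)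

lemma mat_adjoint_carrier [simp]: "(A :: complex mat) \<in> carrier_mat n m \<Longrightarrow> mat_adjoint A \<in> carrier_mat m n"
  by (metis dim_row_mat_adjoint dim_col_mat_adjoint carrier_matD carrier_matI)

lemma mat_adjoint_adjoint [simp]: "mat_adjoint (mat_adjoint (A :: complex mat)) = A"
  by (rule eq_matI) auto

lemma mat_adjoint_one [simp]: "mat_adjoint (1\<^sub>m n :: complex mat) = 1\<^sub>m n"
  by (rule eq_matI) auto

lemma mat_adjoint_zero [simp]: "mat_adjoint (0\<^sub>m n m :: complex mat) = 0\<^sub>m m n"
  by (rule eq_matI) auto

lemma mat_adjoint_mat_diag [simp]: "mat_adjoint (mat_diag n f) = mat_diag n (\<lambda>i. cnj (f i))"
  by (rule eq_matI) (auto simp: mat_diag_def)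

lemma mat_adjoint_mult:
  fixes A B :: "complex mat"
  assumes "A \<in> carrier_mat n m" "B \<in> carrier_mat m k"
  shows "mat_adjoint (A * B) = mat_adjoint B * mat_adjoint A"
proof (rule eq_matI)
  fix i j
  assume "i < dim_row (mat_adjoint B * mat_adjoint A)" "j < dim_col (mat_adjoint B * mat_adjoint A)"
  with assms have "i < k" "j < n"
    by auto
  with assms show "mat_adjoint (A * B) $$ (i, j) = (mat_adjoint B * mat_adjoint A) $$ (i, j)"
    by (simp add: scalar_prod_def atLeast0LessThan mult.commute)
qed (use assms in auto)

lemma mat_adjoint_four_block_mat:
  fixes A B C D :: "complex mat"
  assumes c: "A \<in> carrier_mat n1 m1" "B \<in> carrier_mat n1 m2" "C \<in> carrier_mat n2 m1" "D \<in> carrier_mat n2 m2"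
  shows "mat_adjoint (four_block_mat A B C D)
    = four_block_mat (mat_adjoint A) (mat_adjoint C) (mat_adjoint B) (mat_adjoint D)"
proof (rule eq_matI)
  fix i j
  assume "i < dim_row (four_block_mat (mat_adjoint A) (mat_adjoint C) (mat_adjoint B) (mat_adjoint D))"
    and "j < dim_col (four_block_mat (mat_adjoint A) (mat_adjoint C) (mat_adjoint B) (mat_adjoint D))"
  then have "i < m1 + m2" "j < n1 + n2"
    using c by auto
  moreover have "dim_row A = n1" "dim_col A = m1" "dim_row D = n2" "dim_col D = m2"
    "dim_row B = n1" "dim_col B = m2" "dim_row C = n2" "dim_col C = m1"
    using c by auto
  ultimately show "mat_adjoint (four_block_mat A B C D) $$ (i, j)
    = four_block_mat (mat_adjoint A) (mat_adjoint C) (mat_adjoint B) (mat_adjoint D) $$ (i, j)"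
    by (cases "i < m1"; cases "j < n1") simp_all
qed (use c in auto)

lemma index_mat_adjoint_mult:
  fixes A B :: "complex mat"
  assumes "A \<in> carrier_mat n m" "B \<in> carrier_mat n k" "i < m" "j < k"
  shows "(mat_adjoint A * B) $$ (i, j) = col B j \<bullet>c col A i"
  using assms by (auto simp: scalar_prod_def mult.commute intro!: sum.cong)

lemma cscalar_mat_adjoint:
  fixes M :: "complex mat"
  assumes "M \<in> carrier_mat n m" "u \<in> carrier_vec m" "x \<in> carrier_vec n"
  shows "(M *\<^sub>v u) \<bullet>c x = u \<bullet>c (mat_adjoint M *\<^sub>v x)"
proof -
  have "(M *\<^sub>v u) \<bullet>c x = (\<Sum>i<n. \<Sum>l<m. M $$ (i, l) * u $ l * cnj (x $ i))"
    using assms by (simp add: scalar_prod_def atLeast0LessThan sum_distrib_right)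
  also have "\<dots> = (\<Sum>l<m. \<Sum>i<n. M $$ (i, l) * u $ l * cnj (x $ i))"
    by (rule sum.swap)
  also have "\<dots> = (\<Sum>l<m. u $ l * cnj (\<Sum>i<n. cnj (M $$ (i, l)) * x $ i))"
    by (simp add: sum_distrib_left mult.commute mult.left_commute)
  also have "\<dots> = u \<bullet>c (mat_adjoint M *\<^sub>v x)"
    using assms by (simp add: scalar_prod_def atLeast0LessThan)
  finally show ?thesis .
qed

lemma cscalar_self_eq_sum_cmod: "v \<bullet>c v = complex_of_real (\<Sum>i<dim_vec v. (cmod (v $ i))\<^sup>2)"
  by (simp add: scalar_prod_def atLeast0LessThan complex_norm_square[symmetric])

lemma diag_mult_mat_adjoint:
  assumes "A \<in> carrier_mat n m" "i < n"
  shows "(A * mat_adjoint A) $$ (i, i) = complex_of_real (\<Sum>j<m. (cmod (A $$ (i, j)))\<^sup>2)"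
  using assms by (simp add: scalar_prod_def atLeast0LessThan complex_norm_square[symmetric])

lemma diag_mat_adjoint_mult:
  assumes "A \<in> carrier_mat n m" "j < m"
  shows "(mat_adjoint A * A) $$ (j, j) = complex_of_real (\<Sum>i<n. (cmod (A $$ (i, j)))\<^sup>2)"
  using assms by (simp add: index_mat_adjoint_mult[OF assms(1,1,2,2)] cscalar_self_eq_sum_cmod)

lemma unitary_matD:
  assumes "unitary_mat n U"
  shows "U \<in> carrier_mat n n" "mat_adjoint U * U = 1\<^sub>m n" "U * mat_adjoint U = 1\<^sub>m n"
  using assms mat_mult_left_right_inverse[of "mat_adjoint U" n U]
  unfolding unitary_mat_def by auto

lemma mat_adjoint_mult_conj:
  fixes U V A :: "complex mat"
  assumes "U \<in> carrier_mat n n" "V \<in> carrier_mat n n" "A \<in> carrier_mat n n"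
  shows "mat_adjoint (U * V) * A * (U * V) = mat_adjoint V * (mat_adjoint U * A * U) * V"
proof -
  have U': "mat_adjoint U \<in> carrier_mat n n" and V': "mat_adjoint V \<in> carrier_mat n n"
    using assms by simp_all
  have UA: "mat_adjoint U * A \<in> carrier_mat n n" and UV: "U * V \<in> carrier_mat n n"
    using assms U' by (metis mult_carrier_mat)+
  have UAU: "mat_adjoint U * A * U \<in> carrier_mat n n"
    using UA assms by (metis mult_carrier_mat)
  have "mat_adjoint (U * V) * A * (U * V) = mat_adjoint V * mat_adjoint U * A * (U * V)"
    using assms by (simp only: mat_adjoint_mult[of U n n V n])
  also have "\<dots> = mat_adjoint V * ((mat_adjoint U * A) * (U * V))"
    using assoc_mult_mat[OF V' U' assms(3)] assoc_mult_mat[OF V' UA UV] by simp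
  also have "(mat_adjoint U * A) * (U * V) = mat_adjoint U * A * U * V"
    using assoc_mult_mat[OF UA assms(1,2)] by simp
  also have "mat_adjoint V * (mat_adjoint U * A * U * V) = mat_adjoint V * (mat_adjoint U * A * U) * V"
    using assoc_mult_mat[OF V' UAU assms(2)] by simp
  finally show ?thesis .
qed

lemma unitary_mat_mult:
  assumes "unitary_mat n U" "unitary_mat n V"
  shows "unitary_mat n (U * V)"
proof -
  have U: "U \<in> carrier_mat n n" "mat_adjoint U * U = 1\<^sub>m n"
    and V: "V \<in> carrier_mat n n" "mat_adjoint V * V = 1\<^sub>m n"
    using assms by (simp_all add: unitary_matD)
  have "mat_adjoint (U * V) * 1\<^sub>m n * (U * V) = mat_adjoint V * (mat_adjoint U * 1\<^sub>m n * U) * V"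
    using U V by (intro mat_adjoint_mult_conj) auto
  also have "\<dots> = 1\<^sub>m n"
    using U V by simp
  finally show ?thesis
    using U V unfolding unitary_mat_def by simp
qed

lemma unitary_mat_one_block:
  assumes "unitary_mat m V"
  shows "unitary_mat (Suc m) (four_block_mat (1\<^sub>m 1) (0\<^sub>m 1 m) (0\<^sub>m m 1) V)"
proof -
  have V: "V \<in> carrier_mat m m" "mat_adjoint V * V = 1\<^sub>m m"
    using assms by (simp_all add: unitary_matD)
  then have "mat_adjoint (four_block_mat (1\<^sub>m 1) (0\<^sub>m 1 m) (0\<^sub>m m 1) V)
      * four_block_mat (1\<^sub>m 1) (0\<^sub>m 1 m) (0\<^sub>m m 1) V = 1\<^sub>m (Suc m)"
    by (simp add: mat_adjoint_four_block_mat[of _ 1 1 _ m _ m] mult_four_block_mat[of _ 1 1 _ m _ m _ _ 1 _ m])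
  with V show ?thesis
    unfolding unitary_mat_def by auto
qed

lemma unitary_mat_col_norm:
  assumes "unitary_mat n U" "j < n"
  shows "(\<Sum>i<n. (cmod (U $$ (i, j)))\<^sup>2) = 1"
  using diag_mat_adjoint_mult[of U n n j] assms
  by (simp add: unitary_matD del: of_real_sum of_real_power)

lemma unitary_mat_row_norm:
  assumes "unitary_mat n U" "i < n"
  shows "(\<Sum>j<n. (cmod (U $$ (i, j)))\<^sup>2) = 1"
  using diag_mult_mat_adjoint[of U n n i] assms
  by (simp add: unitary_matD del: of_real_sum of_real_power)

lemma cscalar_smult:
  assumes "v \<in> carrier_vec n" "w \<in> carrier_vec n"
  shows "(a \<cdot>\<^sub>v v) \<bullet>c (b \<cdot>\<^sub>v w) = a * cnj b * (v \<bullet>c w)"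
  using assms by (auto simp: scalar_prod_def sum_distrib_left intro!: sum.cong)

lemma cscalar_smult_left:
  fixes v w :: "complex vec"
  assumes "v \<in> carrier_vec n" "w \<in> carrier_vec n"
  shows "(a \<cdot>\<^sub>v v) \<bullet>c w = a * (v \<bullet>c w)"
  using assms by (auto simp: scalar_prod_def sum_distrib_left mult.assoc intro!: sum.cong)

lemma unitary_mat_of_corthogonal:
  assumes ws: "set ws \<subseteq> carrier_vec n" "corthogonal ws" "length ws = n"
  defines "U \<equiv> mat_of_cols n (map (\<lambda>w. complex_of_real (1 / sqrt (Re (w \<bullet>c w))) \<cdot>\<^sub>v w) ws)"
  shows "unitary_mat n U"
proof -
  let ?a = "\<lambda>i. complex_of_real (1 / sqrt (Re (ws ! i \<bullet>c ws ! i)))"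
  have U: "U \<in> carrier_mat n n"
    using ws unfolding U_def by auto
  have col_U: "col U j = ?a j \<cdot>\<^sub>v ws ! j" if "j < n" for j
    using ws that unfolding U_def by (subst col_mat_of_cols) auto
  have "(mat_adjoint U * U) $$ (i, j) = 1\<^sub>m n $$ (i, j)" if "i < n" "j < n" for i j
  proof -
    have "(mat_adjoint U * U) $$ (i, j) = col U j \<bullet>c col U i"
      by (rule index_mat_adjoint_mult[OF U U that])
    also have "\<dots> = ?a j * cnj (?a i) * (ws ! j \<bullet>c ws ! i)"
      unfolding col_U[OF that(1)] col_U[OF that(2)] using ws that by (intro cscalar_smult) auto
    finally have "(mat_adjoint U * U) $$ (i, j) = ?a j * cnj (?a i) * (ws ! j \<bullet>c ws ! i)" .
    moreover have "ws ! j \<bullet>c ws ! i = 0" if "i \<noteq> j"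
      using corthogonalD[OF ws(2)] \<open>i < n\<close> \<open>j < n\<close> ws(3) that by auto
    moreover have "?a i * cnj (?a i) * (ws ! i \<bullet>c ws ! i) = 1"
    proof -
      have "ws ! i \<bullet>c ws ! i > 0"
        using corthogonalD[OF ws(2), of i i] \<open>i < n\<close> ws(3) conjugate_square_ge_0_vec[of "ws ! i"]
        by (simp add: order_less_le)
      define r where "r = Re (ws ! i \<bullet>c ws ! i)"
      have "ws ! i \<bullet>c ws ! i = complex_of_real r" "r > 0"
        using \<open>ws ! i \<bullet>c ws ! i > 0\<close> unfolding r_def by (simp_all add: less_complex_def complex_eq_iff)
      then show ?thesis
        by (simp add: field_simps flip: of_real_mult)
    qed
    ultimately show ?thesis
      using that by auto
  qed
  with U show ?thesis
    unfolding unitary_mat_def by (intro conjI eq_matI) auto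
qed

lemma exists_unitary_mat_col0:
  assumes v: "v \<in> carrier_vec n" "v \<noteq> 0\<^sub>v n"
  obtains U a where "unitary_mat n U" "col U 0 = a \<cdot>\<^sub>v v"
proof -
  interpret cof_vec_space n "TYPE(complex)" .
  define ws where "ws = gram_schmidt n (basis_completion v)"
  have b: "set (basis_completion v) \<subseteq> carrier_vec n" "distinct (basis_completion v)"
    "\<not> lin_dep (set (basis_completion v))" "length (basis_completion v) = n"
    "hd (basis_completion v) = v"
    using basis_completion[OF v] by auto
  then have ws: "set ws \<subseteq> carrier_vec n" "corthogonal ws" "length ws = n"
    using gram_schmidt_result[OF b(1-3) ws_def] by auto
  have "0 < n"
    using v by (cases n) auto
  then obtain vs where "basis_completion v = v # vs"
    using b(4,5) by (cases "basis_completion v") auto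
  then have "ws ! 0 = v"
    using gram_schmidt_hd[OF v(1), of vs] ws(3) \<open>0 < n\<close> unfolding ws_def
    by (metis hd_conv_nth length_0_conv not_less0)
  moreover have "col (mat_of_cols n (map (\<lambda>w. complex_of_real (1 / sqrt (Re (w \<bullet>c w))) \<cdot>\<^sub>v w) ws)) 0
      = complex_of_real (1 / sqrt (Re (ws ! 0 \<bullet>c ws ! 0))) \<cdot>\<^sub>v ws ! 0"
    using ws \<open>0 < n\<close> by (subst col_mat_of_cols) auto
  ultimately show ?thesis
    using that[OF unitary_mat_of_corthogonal[OF ws]] by metis
qed

lemma partial_isometry_row_norm_le_1:
  fixes U :: "complex mat"
  assumes U: "U \<in> carrier_mat n m" and partial_isometry: "U * (mat_adjoint U * U) = U" and "i < n"
  shows "(\<Sum>j<m. (cmod (U $$ (i, j)))\<^sup>2) \<le> 1"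
proof -
  define Q where "Q = U * mat_adjoint U"
  define r where "r = (\<Sum>j<m. (cmod (U $$ (i, j)))\<^sup>2)"
  have U': "mat_adjoint U \<in> carrier_mat m n"
    using U by simp
  have Q: "Q \<in> carrier_mat n n"
    unfolding Q_def using mult_carrier_mat[OF U U'] .
  have Q_herm: "mat_adjoint Q = Q"
    unfolding Q_def using mat_adjoint_mult[OF U U'] by simp
  have "Q * Q = U * (mat_adjoint U * U) * mat_adjoint U"
    unfolding Q_def
    using assoc_mult_mat[OF U U' mult_carrier_mat[OF U U']] assoc_mult_mat[OF U' U U']
      assoc_mult_mat[OF U mult_carrier_mat[OF U' U] U'] by simp
  also have "\<dots> = Q"
    unfolding partial_isometry Q_def ..
  finally have Q_idem: "Q * mat_adjoint Q = Q"
    unfolding Q_herm .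
  have "complex_of_real r = Q $$ (i, i)"
    unfolding r_def Q_def using diag_mult_mat_adjoint[OF U \<open>i < n\<close>] by simp
  also have "\<dots> = complex_of_real (\<Sum>l<n. (cmod (Q $$ (i, l)))\<^sup>2)"
    using diag_mult_mat_adjoint[OF Q \<open>i < n\<close>] unfolding Q_idem .
  finally have "r = (\<Sum>l<n. (cmod (Q $$ (i, l)))\<^sup>2)"
    by (simp only: of_real_eq_iff)
  moreover have "(cmod (Q $$ (i, i)))\<^sup>2 \<le> (\<Sum>l<n. (cmod (Q $$ (i, l)))\<^sup>2)"
    using \<open>i < n\<close> by (intro member_le_sum) auto
  moreover have "0 \<le> r"
    unfolding r_def by (simp add: sum_nonneg)
  moreover have "cmod (Q $$ (i, i)) = r"
    using \<open>complex_of_real r = Q $$ (i, i)\<close>[symmetric] \<open>0 \<le> r\<close> by simp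
  ultimately have "r\<^sup>2 \<le> r"
    by simp
  have "r \<le> 1"
  proof (rule ccontr)
    assume "\<not> r \<le> 1"
    then have "r * 1 < r * r"
      by (intro mult_strict_left_mono) auto
    with \<open>r\<^sup>2 \<le> r\<close> show False
      by (simp add: power2_eq_square)
  qed
  then show ?thesis
    unfolding r_def .
qed

lemma mat_diag_mult_vec:
  assumes "v \<in> carrier_vec n"
  shows "mat_diag n f *\<^sub>v v = vec n (\<lambda>i. f i * v $ i)"
proof (rule eq_vecI)
  fix i
  assume "i < dim_vec (vec n (\<lambda>i. f i * v $ i))"
  then have "i < n"
    by simp
  then have "(mat_diag n f *\<^sub>v v) $ i = (\<Sum>l<n. (if i = l then f l else 0) * v $ l)"
    using assms by (simp add: mat_diag_def scalar_prod_def atLeast0LessThan)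
  also have "\<dots> = (\<Sum>l<n. if i = l then f l * v $ l else 0)"
    by (rule sum.cong) simp_all
  also have "\<dots> = f i * v $ i"
    using \<open>i < n\<close> by simp
  finally show "(mat_diag n f *\<^sub>v v) $ i = vec n (\<lambda>i. f i * v $ i) $ i"
    using \<open>i < n\<close> by simp
qed (use assms in \<open>auto simp: mat_diag_def\<close>)

lemma cscalar_mat_diag_self:
  assumes "y \<in> carrier_vec n"
  shows "(mat_diag n (\<lambda>j. complex_of_real (\<sigma> j)) *\<^sub>v y) \<bullet>c y
    = complex_of_real (\<Sum>j<n. \<sigma> j * (cmod (y $ j))\<^sup>2)"
proof -
  have "(mat_diag n (\<lambda>j. complex_of_real (\<sigma> j)) *\<^sub>v y) \<bullet>c y
      = (\<Sum>j<n. complex_of_real (\<sigma> j) * y $ j * cnj (y $ j))"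
    using assms by (simp add: mat_diag_mult_vec scalar_prod_def atLeast0LessThan)
  also have "\<dots> = complex_of_real (\<Sum>j<n. \<sigma> j * (cmod (y $ j))\<^sup>2)"
    by (simp add: mult.assoc complex_norm_square[symmetric])
  finally show ?thesis .
qed

lemma psd_mat_conj_diag:
  fixes V :: "complex mat"
  assumes V: "V \<in> carrier_mat p p" and \<sigma>: "\<And>j. j < p \<Longrightarrow> 0 \<le> \<sigma> j"
  shows "psd_mat p (V * mat_diag p (\<lambda>j. complex_of_real (\<sigma> j)) * mat_adjoint V)"
proof -
  define S where "S = mat_diag p (\<lambda>j. complex_of_real (\<sigma> j))"
  have S: "S \<in> carrier_mat p p" and V': "mat_adjoint V \<in> carrier_mat p p"
    using V unfolding S_def by simp_all
  have VS: "V * S \<in> carrier_mat p p"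
    using mult_carrier_mat[OF V S] .
  have "V * S * mat_adjoint V \<in> carrier_mat p p"
    using mult_carrier_mat[OF VS V'] .
  moreover have "mat_adjoint (V * S * mat_adjoint V) = V * S * mat_adjoint V"
    using mat_adjoint_mult[OF VS V'] mat_adjoint_mult[OF V S] assoc_mult_mat[OF V S V']
    unfolding S_def by simp
  moreover have "(V * S * mat_adjoint V *\<^sub>v x) \<bullet>c x
      = complex_of_real (\<Sum>j<p. \<sigma> j * (cmod ((mat_adjoint V *\<^sub>v x) $ j))\<^sup>2)"
    if x: "x \<in> carrier_vec p" for x
  proof -
    define y where "y = mat_adjoint V *\<^sub>v x"
    have y: "y \<in> carrier_vec p"
      unfolding y_def using V' x by simp
    have "V * S * mat_adjoint V *\<^sub>v x = V *\<^sub>v (S *\<^sub>v y)"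
      unfolding y_def using assoc_mult_mat_vec[OF VS V' x] assoc_mult_mat_vec[OF V S y] y_def by simp
    then have "(V * S * mat_adjoint V *\<^sub>v x) \<bullet>c x = (S *\<^sub>v y) \<bullet>c y"
      using cscalar_mat_adjoint[OF V _ x, of "S *\<^sub>v y"] S y by (simp add: y_def)
    also have "\<dots> = complex_of_real (\<Sum>j<p. \<sigma> j * (cmod (y $ j))\<^sup>2)"
      unfolding S_def by (rule cscalar_mat_diag_self[OF y])
    finally show ?thesis
      unfolding y_def .
  qed
  moreover have "0 \<le> (\<Sum>j<p. \<sigma> j * (cmod ((mat_adjoint V *\<^sub>v x) $ j))\<^sup>2)" for x
    using \<sigma> by (intro sum_nonneg) simp
  ultimately show ?thesis
    unfolding psd_mat_def S_def by simp
qed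

section \<open>Unitary diagonalization of Hermitian matrices\<close>

lemma exists_unitary_mat_eigenvector_col0:
  assumes "A \<in> carrier_mat n n" "eigenvalue A e"
  obtains U where "unitary_mat n U" "A *\<^sub>v col U 0 = e \<cdot>\<^sub>v col U 0"
proof -
  obtain v where v: "v \<in> carrier_vec n" "v \<noteq> 0\<^sub>v n" "A *\<^sub>v v = e \<cdot>\<^sub>v v"
    using assms unfolding eigenvalue_def eigenvector_def by auto
  obtain U a where "unitary_mat n U" "col U 0 = a \<cdot>\<^sub>v v"
    using exists_unitary_mat_col0[OF v(1,2)] .
  moreover have "A *\<^sub>v (a \<cdot>\<^sub>v v) = e \<cdot>\<^sub>v (a \<cdot>\<^sub>v v)"
    using assms(1) v by (simp add: mult_mat_vec smult_smult_assoc mult.commute)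
  ultimately show ?thesis
    using that by simp
qed

lemma char_poly_unitary_conj:
  assumes "A \<in> carrier_mat n n" "unitary_mat n U"
  shows "char_poly (mat_adjoint U * A * U) = char_poly A"
proof -
  have "similar_mat_wit (mat_adjoint U * A * U) A (mat_adjoint U) U"
    unfolding similar_mat_wit_def Let_def using assms(1) unitary_matD[OF assms(2)] by auto
  then show ?thesis
    by (intro char_poly_similar) (auto simp: similar_mat_def)
qed

lemma hermitian_first_col_block:
  fixes B :: "complex mat"
  assumes B: "B \<in> carrier_mat (Suc m) (Suc m)" "mat_adjoint B = B"
    and col0: "\<And>i. i < Suc m \<Longrightarrow> B $$ (i, 0) = (if i = 0 then e else 0)"
  obtains A' where "A' \<in> carrier_mat m m" "mat_adjoint A' = A'"
    "B = four_block_mat (mat 1 1 (\<lambda>_. e)) (0\<^sub>m 1 m) (0\<^sub>m m 1) A'"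
proof -
  have row0: "B $$ (0, j) = (if j = 0 then e else 0)" if "j < Suc m" for j
  proof -
    have "B $$ (0, j) = mat_adjoint B $$ (0, j)"
      by (simp only: B(2))
    also have "\<dots> = cnj (B $$ (j, 0))"
      using B(1) that by simp
    finally show ?thesis
      using col0[OF that] col0[of 0] by auto
  qed
  define A' where "A' = mat m m (\<lambda>(i, j). B $$ (Suc i, Suc j))"
  have "A' \<in> carrier_mat m m"
    unfolding A'_def by simp
  moreover have "mat_adjoint A' = A'"
  proof (rule eq_matI)
    fix i j
    assume "i < dim_row A'" "j < dim_col A'"
    then have "i < m" "j < m"
      unfolding A'_def by auto
    then have "mat_adjoint A' $$ (i, j) = mat_adjoint B $$ (Suc i, Suc j)"
      using B(1) unfolding A'_def by simp
    then show "mat_adjoint A' $$ (i, j) = A' $$ (i, j)"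
      using \<open>i < m\<close> \<open>j < m\<close> unfolding B(2) A'_def by simp
  qed (simp_all add: A'_def)
  moreover have "B = four_block_mat (mat 1 1 (\<lambda>_. e)) (0\<^sub>m 1 m) (0\<^sub>m m 1) A'"
  proof (rule eq_matI)
    fix i j
    assume "i < dim_row (four_block_mat (mat 1 1 (\<lambda>_. e)) (0\<^sub>m 1 m) (0\<^sub>m m 1) A')"
      "j < dim_col (four_block_mat (mat 1 1 (\<lambda>_. e)) (0\<^sub>m 1 m) (0\<^sub>m m 1) A')"
    then have "i < Suc m" "j < Suc m"
      unfolding A'_def by auto
    then show "B $$ (i, j) = four_block_mat (mat 1 1 (\<lambda>_. e)) (0\<^sub>m 1 m) (0\<^sub>m m 1) A' $$ (i, j)"
      using col0 row0 unfolding A'_def by (cases i; cases j) auto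
  qed (use B(1) in \<open>auto simp: A'_def\<close>)
  ultimately show ?thesis
    using that by blast
qed

lemma hermitian_unitary_deflation:
  fixes A U :: "complex mat"
  assumes A: "A \<in> carrier_mat (Suc m) (Suc m)" "mat_adjoint A = A" and "unitary_mat (Suc m) U"
    and ev: "A *\<^sub>v col U 0 = e \<cdot>\<^sub>v col U 0"
  obtains A' where "A' \<in> carrier_mat m m" "mat_adjoint A' = A'"
    "mat_adjoint U * A * U = four_block_mat (mat 1 1 (\<lambda>_. e)) (0\<^sub>m 1 m) (0\<^sub>m m 1) A'"
proof (rule hermitian_first_col_block)
  have U: "U \<in> carrier_mat (Suc m) (Suc m)" "mat_adjoint U * U = 1\<^sub>m (Suc m)"
    using \<open>unitary_mat (Suc m) U\<close> by (simp_all add: unitary_matD)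
  have AU: "A * U \<in> carrier_mat (Suc m) (Suc m)"
    using mult_carrier_mat[OF A(1) U(1)] .
  have UAU_assoc: "mat_adjoint U * A * U = mat_adjoint U * (A * U)"
    using assoc_mult_mat[OF mat_adjoint_carrier[OF U(1)] A(1) U(1)] .
  show "mat_adjoint U * A * U \<in> carrier_mat (Suc m) (Suc m)"
    unfolding UAU_assoc using mult_carrier_mat[OF mat_adjoint_carrier[OF U(1)] AU] .
  have "mat_adjoint (mat_adjoint U * (A * U)) = mat_adjoint (A * U) * U"
    using mat_adjoint_mult[OF mat_adjoint_carrier[OF U(1)] AU] by simp
  also have "\<dots> = mat_adjoint U * A * U"
    using A U by (simp add: mat_adjoint_mult[of A _ _ U])
  finally show "mat_adjoint (mat_adjoint U * A * U) = mat_adjoint U * A * U"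
    unfolding UAU_assoc .
  fix i
  assume i: "i < Suc m"
  have "(mat_adjoint U * A * U) $$ (i, 0) = col (A * U) 0 \<bullet>c col U i"
    unfolding UAU_assoc by (rule index_mat_adjoint_mult[OF U(1) AU i]) simp
  also have "col (A * U) 0 = e \<cdot>\<^sub>v col U 0"
    using col_mult2[OF A(1) U(1)] ev by simp
  also have "(e \<cdot>\<^sub>v col U 0) \<bullet>c col U i = e * (col U 0 \<bullet>c col U i)"
    using U(1) i by (intro cscalar_smult_left[of _ "Suc m"] col_carrier_vec) auto
  also have "col U 0 \<bullet>c col U i = 1\<^sub>m (Suc m) $$ (i, 0)"
    using index_mat_adjoint_mult[OF U(1) U(1) i] U(2) by simp
  finally show "(mat_adjoint U * A * U) $$ (i, 0) = (if i = 0 then e else 0)"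
    using i by simp
qed

lemma mat_adjoint_one_block_conj:
  fixes V B :: "complex mat"
  assumes V: "V \<in> carrier_mat m m" and B: "B \<in> carrier_mat m m"
  defines "W \<equiv> four_block_mat (1\<^sub>m 1) (0\<^sub>m 1 m) (0\<^sub>m m 1) V"
  shows "mat_adjoint W * four_block_mat (mat 1 1 (\<lambda>_. e)) (0\<^sub>m 1 m) (0\<^sub>m m 1) B * W
    = four_block_mat (mat 1 1 (\<lambda>_. e)) (0\<^sub>m 1 m) (0\<^sub>m m 1) (mat_adjoint V * B * V)"
proof -
  have VB: "mat_adjoint V * B \<in> carrier_mat m m"
    using mult_carrier_mat[OF mat_adjoint_carrier[OF V] B] .
  have "mat_adjoint W = four_block_mat (1\<^sub>m 1) (0\<^sub>m 1 m) (0\<^sub>m m 1) (mat_adjoint V)"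
    unfolding W_def using V by (simp add: mat_adjoint_four_block_mat[of _ 1 1 _ m _ m])
  then have "mat_adjoint W * four_block_mat (mat 1 1 (\<lambda>_. e)) (0\<^sub>m 1 m) (0\<^sub>m m 1) B
      = four_block_mat (mat 1 1 (\<lambda>_. e)) (0\<^sub>m 1 m) (0\<^sub>m m 1) (mat_adjoint V * B)"
    using V B VB by (simp add: mult_four_block_mat[of _ 1 1 _ m _ m _ _ 1 _ m])
  then show ?thesis
    unfolding W_def using V B VB by (simp add: mult_four_block_mat[of _ 1 1 _ m _ m _ _ 1 _ m])
qed

lemma four_block_mat_diag:
  "four_block_mat (mat 1 1 (\<lambda>_. e)) (0\<^sub>m 1 m) (0\<^sub>m m 1) (mat_diag m (\<lambda>i. es ! i))
    = mat_diag (Suc m) (\<lambda>i. (e # es) ! i)"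
  by (rule eq_matI) (auto simp: mat_diag_def nth_Cons')

lemma char_poly_one_by_one: "char_poly (mat 1 1 (\<lambda>_. e)) = [:- e, 1:]"
  by (simp add: char_poly_defs det_def sign_def)

lemma unitary_one_block_diagonalization:
  fixes A U V' A' :: "complex mat"
  assumes A: "A \<in> carrier_mat (Suc m) (Suc m)" and U: "unitary_mat (Suc m) U"
    and UAU: "mat_adjoint U * A * U = four_block_mat (mat 1 1 (\<lambda>_. e)) (0\<^sub>m 1 m) (0\<^sub>m m 1) A'"
    and A': "A' \<in> carrier_mat m m" and V': "unitary_mat m V'"
    and V'A'V': "mat_adjoint V' * A' * V' = mat_diag m (\<lambda>i. es ! i)"
  defines "V \<equiv> U * four_block_mat (1\<^sub>m 1) (0\<^sub>m 1 m) (0\<^sub>m m 1) V'"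
  shows "unitary_mat (Suc m) V" "mat_adjoint V * A * V = mat_diag (Suc m) (\<lambda>i. (e # es) ! i)"
proof -
  have V'_carrier: "V' \<in> carrier_mat m m"
    using V' by (simp add: unitary_matD)
  show "unitary_mat (Suc m) V"
    unfolding V_def using unitary_mat_mult[OF U unitary_mat_one_block[OF V']] .
  have "four_block_mat (1\<^sub>m 1) (0\<^sub>m 1 m) (0\<^sub>m m 1) V' \<in> carrier_mat (Suc m) (Suc m)"
    using four_block_carrier_mat[of "1\<^sub>m 1" 1 1 V' m m] V'_carrier by simp
  then have "mat_adjoint V * A * V
      = mat_adjoint (four_block_mat (1\<^sub>m 1) (0\<^sub>m 1 m) (0\<^sub>m m 1) V')
        * (mat_adjoint U * A * U) * four_block_mat (1\<^sub>m 1) (0\<^sub>m 1 m) (0\<^sub>m m 1) V'"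
    unfolding V_def using A U by (intro mat_adjoint_mult_conj) (auto simp: unitary_matD)
  also have "\<dots> = mat_diag (Suc m) (\<lambda>i. (e # es) ! i)"
    unfolding UAU mat_adjoint_one_block_conj[OF V'_carrier A'] V'A'V' by (rule four_block_mat_diag)
  finally show "mat_adjoint V * A * V = mat_diag (Suc m) (\<lambda>i. (e # es) ! i)" .
qed

lemma hermitian_unitary_diagonalization:
  fixes A :: "complex mat"
  assumes "A \<in> carrier_mat n n" "mat_adjoint A = A" "char_poly A = (\<Prod>e\<leftarrow>es. [:- e, 1:])"
  shows "\<exists>V. unitary_mat n V \<and> mat_adjoint V * A * V = mat_diag n (\<lambda>i. es ! i)"
  using assms
proof (induction es arbitrary: n A)
  case Nil
  then have "n = 0"
    using degree_monic_char_poly[of A n] by simp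
  with Nil.prems show ?case
    by (intro exI[of _ "1\<^sub>m 0"]) (auto simp: unitary_mat_def mat_diag_def intro!: eq_matI)
next
  case (Cons e es n A)
  have char_poly_A: "char_poly A = [:- e, 1:] * (\<Prod>e\<leftarrow>es. [:- e, 1:])"
    using Cons.prems by simp
  have "degree (char_poly A) = Suc (degree (\<Prod>e\<leftarrow>es. [:- e, 1:]))"
    unfolding char_poly_A by (subst degree_mult_eq) (auto simp: monic_prod_list)
  then obtain m where n: "n = Suc m"
    using degree_monic_char_poly[OF Cons.prems(1)] by (cases n) auto
  have A: "A \<in> carrier_mat (Suc m) (Suc m)" "mat_adjoint A = A"
    using Cons.prems unfolding n by simp_all
  have "eigenvalue A e"
    unfolding eigenvalue_root_char_poly[OF A(1)] char_poly_A by simp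
  then obtain U where U: "unitary_mat (Suc m) U" "A *\<^sub>v col U 0 = e \<cdot>\<^sub>v col U 0"
    using exists_unitary_mat_eigenvector_col0[OF A(1)] by blast
  then obtain A' where A': "A' \<in> carrier_mat m m" "mat_adjoint A' = A'"
    and UAU: "mat_adjoint U * A * U = four_block_mat (mat 1 1 (\<lambda>_. e)) (0\<^sub>m 1 m) (0\<^sub>m m 1) A'"
    using hermitian_unitary_deflation[OF A] by blast
  have "[:- e, 1:] * (\<Prod>e\<leftarrow>es. [:- e, 1:]) = char_poly (mat_adjoint U * A * U)"
    unfolding char_poly_A char_poly_unitary_conj[OF A(1) U(1)] ..
  also have "\<dots> = [:- e, 1:] * char_poly A'"
    unfolding UAU char_poly_one_by_one[symmetric] using A'(1) by (intro char_poly_four_block_zeros_col) auto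
  finally have "char_poly A' = (\<Prod>e\<leftarrow>es. [:- e, 1:])"
    using mult_left_cancel[of "[:- e, 1:]"] by simp
  then obtain V' where "unitary_mat m V'" "mat_adjoint V' * A' * V' = mat_diag m (\<lambda>i. es ! i)"
    using Cons.IH[OF A'] by blast
  then show ?case
    using unitary_one_block_diagonalization[OF A(1) U(1) UAU A'(1)] unfolding n by blast
qed

section \<open>Summation inequalities\<close>

lemma weighted_sum_ge_of_partial_sums_nonneg:
  fixes c x :: "nat \<Rightarrow> real"
  assumes "0 < n"
    and "\<And>i j. i \<le> j \<Longrightarrow> j < n \<Longrightarrow> c j \<le> c i"
    and "\<And>k. k \<le> n \<Longrightarrow> 0 \<le> (\<Sum>i<k. x i)"
  shows "c (n - 1) * (\<Sum>i<n. x i) \<le> (\<Sum>i<n. c i * x i)"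
  using assms
proof (induction n)
  case 0
  then show ?case
    by simp
next
  case (Suc n)
  show ?case
  proof (cases "n = 0")
    case True
    then show ?thesis
      by simp
  next
    case False
    have "c (n - 1) * (\<Sum>i<n. x i) \<le> (\<Sum>i<n. c i * x i)"
      using Suc False by simp
    moreover have "c n * (\<Sum>i<n. x i) \<le> c (n - 1) * (\<Sum>i<n. x i)"
      using Suc.prems(2)[of "n - 1" n] Suc.prems(3)[of n] by (intro mult_right_mono) simp_all
    ultimately show ?thesis
      by (simp add: algebra_simps)
  qed
qed

lemma sum_eq_0_if_weighted_sum_eq_0:
  fixes c x :: "nat \<Rightarrow> real"
  assumes "\<And>i j. i \<le> j \<Longrightarrow> j < n \<Longrightarrow> c j \<le> c i" "\<And>j. j < n \<Longrightarrow> 0 < c j"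
    and partial_sums: "\<And>k. k \<le> n \<Longrightarrow> 0 \<le> (\<Sum>i<k. x i)"
    and "(\<Sum>i<n. c i * x i) = 0"
  shows "(\<Sum>i<n. x i) = 0"
proof (cases "n = 0")
  case False
  then have "c (n - 1) * (\<Sum>i<n. x i) \<le> 0"
    using weighted_sum_ge_of_partial_sums_nonneg[of n c x] assms by simp
  moreover have "0 < c (n - 1)"
    using assms(2) False by simp
  ultimately show ?thesis
    using partial_sums[of n] by (simp add: mult_le_0_iff)
qed simp

lemma rev_sort_nth_antimono:
  fixes xs :: "'a :: linorder list"
  assumes "i \<le> j" "j < length xs"
  shows "rev (sort xs) ! j \<le> rev (sort xs) ! i"
  using assms by (simp add: rev_nth sorted_nth_mono)

lemma sum_nth_eq_if_mset_eq:
  assumes "mset ys = mset xs"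
  shows "(\<Sum>i<length ys. f (ys ! i)) = (\<Sum>i<length xs. f (xs ! i))"
proof -
  have "(\<Sum>i<length ys. f (ys ! i)) = sum_list (map f ys)"
    by (simp add: sum_list_sum_nth atLeast0LessThan)
  also have "\<dots> = sum_list (map f xs)"
    using assms by (metis mset_map sum_mset_sum_list)
  also have "\<dots> = (\<Sum>i<length xs. f (xs ! i))"
    by (simp add: sum_list_sum_nth atLeast0LessThan)
  finally show ?thesis .
qed

lemma sum_pos_part_rev_sort:
  fixes xs :: "real list"
  assumes "0 < k" "k \<le> length xs"
  defines "t \<equiv> rev (sort xs) ! (k - 1)"
  shows "(\<Sum>j<length xs. max (xs ! j - t) 0) = (\<Sum>i<k. rev (sort xs) ! i) - real k * t"
proof -
  let ?s = "rev (sort xs)"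
  have large: "t \<le> ?s ! i" if "i < k" for i
    unfolding t_def using that assms by (intro rev_sort_nth_antimono) auto
  have small: "?s ! i \<le> t" if "k \<le> i" "i < length xs" for i
    unfolding t_def using that assms by (intro rev_sort_nth_antimono) auto
  have "(\<Sum>j<length xs. max (xs ! j - t) 0) = (\<Sum>i<length xs. max (?s ! i - t) 0)"
    using sum_nth_eq_if_mset_eq[of ?s xs "\<lambda>y. max (y - t) 0"] by simp
  also have "\<dots> = (\<Sum>i<k. max (?s ! i - t) 0) + (\<Sum>i\<in>{k..<length xs}. max (?s ! i - t) 0)"
    using sum.atLeastLessThan_concat[of 0 k "length xs" "\<lambda>i. max (?s ! i - t) 0"] assms(2)
    by (simp add: lessThan_atLeast0)
  also have "(\<Sum>i\<in>{k..<length xs}. max (?s ! i - t) 0) = 0"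
    using small by (intro sum.neutral) auto
  also have "(\<Sum>i<k. max (?s ! i - t) 0) = (\<Sum>i<k. ?s ! i - t)"
    using large by (intro sum.cong) auto
  finally show ?thesis
    by (simp add: sum_subtractf)
qed

lemma mult_le_max_diff_add:
  fixes x t a :: real
  assumes "0 \<le> a" "a \<le> 1"
  shows "x * a \<le> max (x - t) 0 + t * a"
proof (cases "t \<le> x")
  case True
  then have "(x - t) * a \<le> x - t"
    using assms by (simp add: mult_left_le)
  then show ?thesis
    by (simp add: algebra_simps)
next
  case False
  then have "x * a \<le> t * a"
    using assms(1) by (simp add: mult_right_mono)
  then show ?thesis
    by simp
qed

lemma weighted_sum_le_sum_largest:
  fixes xs :: "real list" and a :: "nat \<Rightarrow> real"
  assumes "\<And>x. x \<in> set xs \<Longrightarrow> 0 \<le> x"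
    and "\<And>j. j < length xs \<Longrightarrow> 0 \<le> a j \<and> a j \<le> 1"
    and "(\<Sum>j<length xs. a j) \<le> real k" "k \<le> length xs"
  shows "(\<Sum>j<length xs. xs ! j * a j) \<le> (\<Sum>i<k. rev (sort xs) ! i)"
proof (cases "k = 0")
  case True
  then have "\<forall>j\<in>{..<length xs}. a j = 0"
    using assms(2,3) by (subst sum_nonneg_eq_0_iff[symmetric]) (auto intro: antisym sum_nonneg)
  then show ?thesis
    using True by simp
next
  case False
  define t where "t = rev (sort xs) ! (k - 1)"
  have "k - 1 < length (rev (sort xs))"
    using False assms(4) by simp
  then have "t \<in> set (rev (sort xs))"
    unfolding t_def by (rule nth_mem)
  then have "0 \<le> t"
    using assms(1) by simp
  have "(\<Sum>j<length xs. xs ! j * a j) \<le> (\<Sum>j<length xs. max (xs ! j - t) 0 + t * a j)"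
    using assms(2) by (intro sum_mono mult_le_max_diff_add) auto
  also have "\<dots> \<le> (\<Sum>j<length xs. max (xs ! j - t) 0) + t * real k"
    using mult_left_mono[OF assms(3) \<open>0 \<le> t\<close>] by (simp add: sum.distrib sum_distrib_left)
  also have "\<dots> = (\<Sum>i<k. rev (sort xs) ! i)"
    using sum_pos_part_rev_sort[of k xs] False assms(4) unfolding t_def by simp
  finally show ?thesis .
qed

lemma sum_cmod_diff_sq:
  "(\<Sum>i\<in>I. (cmod (a i - complex_of_real r * b i))\<^sup>2)
    = (\<Sum>i\<in>I. (cmod (a i))\<^sup>2) - 2 * r * Re (\<Sum>i\<in>I. a i * cnj (b i)) + r\<^sup>2 * (\<Sum>i\<in>I. (cmod (b i))\<^sup>2)"
proof -
  have "(cmod (a i - complex_of_real r * b i))\<^sup>2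
      = (cmod (a i))\<^sup>2 - 2 * r * Re (a i * cnj (b i)) + r\<^sup>2 * (cmod (b i))\<^sup>2" for i
    by (simp only: cmod_power2) (simp add: power2_eq_square algebra_simps)
  then have "(\<Sum>i\<in>I. (cmod (a i - complex_of_real r * b i))\<^sup>2)
      = (\<Sum>i\<in>I. (cmod (a i))\<^sup>2 - 2 * r * Re (a i * cnj (b i)) + r\<^sup>2 * (cmod (b i))\<^sup>2)"
    by (rule sum.cong[OF refl])
  then show ?thesis
    by (simp only: sum.distrib sum_subtractf sum_distrib_left Re_sum)
qed

lemma Re_sum_mult_cnj_le:
  assumes "finite I" "(\<Sum>i\<in>I. (cmod (a i))\<^sup>2) = r\<^sup>2" "(\<Sum>i\<in>I. (cmod (b i))\<^sup>2) = 1" "0 \<le> r"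
  shows "Re (\<Sum>i\<in>I. a i * cnj (b i)) \<le> r"
proof (cases "r = 0")
  case True
  then have "\<forall>i\<in>I. (cmod (a i))\<^sup>2 = 0"
    using assms(1,2) by (subst sum_nonneg_eq_0_iff[symmetric]) auto
  with True show ?thesis
    by simp
next
  case False
  have "0 \<le> (\<Sum>i\<in>I. (cmod (a i - complex_of_real r * b i))\<^sup>2)"
    by (simp add: sum_nonneg)
  also have "\<dots> = 2 * r * (r - Re (\<Sum>i\<in>I. a i * cnj (b i)))"
    unfolding sum_cmod_diff_sq assms(2,3) by (simp add: power2_eq_square algebra_simps)
  finally show ?thesis
    using False assms(4) by (simp add: zero_le_mult_iff)
qed

lemma Re_sum_mult_cnj_eqD:
  assumes "finite I" "(\<Sum>i\<in>I. (cmod (a i))\<^sup>2) = r\<^sup>2" "(\<Sum>i\<in>I. (cmod (b i))\<^sup>2) = 1"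
    and "Re (\<Sum>i\<in>I. a i * cnj (b i)) = r" "i \<in> I"
  shows "a i = complex_of_real r * b i"
proof -
  have "(\<Sum>i\<in>I. (cmod (a i - complex_of_real r * b i))\<^sup>2) = 0"
    unfolding sum_cmod_diff_sq assms(2-4) by (simp add: power2_eq_square)
  then have "\<forall>i\<in>I. (cmod (a i - complex_of_real r * b i))\<^sup>2 = 0"
    using assms(1) by (subst sum_nonneg_eq_0_iff[symmetric]) auto
  with \<open>i \<in> I\<close> show ?thesis
    by simp
qed

section \<open>Ky Fan's trace inequality and its equality case\<close>

lemma proots_linear_factors: "proots (\<Prod>e\<leftarrow>es. [:- e, 1:]) = mset (es :: complex list)"
proof (induction es)
  case (Cons e es)
  have "(\<Prod>e\<leftarrow>es. [:- e, 1:]) \<noteq> 0"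
    using monic_prod_list[of "map (\<lambda>e. [:- e, 1:]) es"] by auto
  then show ?case
    using Cons by (simp add: proots_mult del: mult_pCons_left)
qed simp

(* A singular value decomposition W V^* in which the left unitary factor has been multiplied into
   the diagonal one: the columns of W are orthogonal, of lengths \<sigma> j. *)
locale column_svd =
  fixes p :: nat and W V :: "complex mat" and \<sigma> :: "nat \<Rightarrow> real"
  assumes unitary_V: "unitary_mat p V"
    and carrier_W: "W \<in> carrier_mat p p"
    and orthogonal_cols_W: "mat_adjoint W * W = mat_diag p (\<lambda>j. complex_of_real ((\<sigma> j)\<^sup>2))"
    and nonneg_\<sigma>: "\<And>j. j < p \<Longrightarrow> 0 \<le> \<sigma> j"
begin

lemma col_norm_W: "j < p \<Longrightarrow> (\<Sum>i<p. (cmod (W $$ (i, j)))\<^sup>2) = (\<sigma> j)\<^sup>2"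
  using diag_mat_adjoint_mult[OF carrier_W, of j] orthogonal_cols_W
  by (simp add: mat_diag_def del: of_real_sum of_real_power)

lemma W_eq_0: assumes "i < p" "j < p" "\<sigma> j = 0" shows "W $$ (i, j) = 0"
proof -
  have "\<forall>i\<in>{..<p}. (cmod (W $$ (i, j)))\<^sup>2 = 0"
    using col_norm_W[OF assms(2)] assms(3) by (subst sum_nonneg_eq_0_iff[symmetric]) auto
  with assms(1) show ?thesis
    by simp
qed

lemma diag_W_adjoint_V:
  "i < p \<Longrightarrow> (W * mat_adjoint V) $$ (i, i) = (\<Sum>j<p. W $$ (i, j) * cnj (V $$ (i, j)))"
  using carrier_W unitary_matD(1)[OF unitary_V] by (simp add: scalar_prod_def atLeast0LessThan)

lemma row_norm_W_scaled_le_1: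
  assumes "i < p"
  shows "(\<Sum>j<p. (cmod (W $$ (i, j)))\<^sup>2 / (\<sigma> j)\<^sup>2) \<le> 1"
proof -
  \<comment> \<open>Where \<sigma> j = 0, both 1 / \<sigma> j and the column j of W vanish, so U = W D is a partial isometry.\<close>
  define D where "D = mat_diag p (\<lambda>j. complex_of_real (1 / \<sigma> j))"
  define U where "U = W * D"
  have D: "D \<in> carrier_mat p p" and U: "U \<in> carrier_mat p p"
    unfolding U_def D_def using carrier_W by simp_all
  have U_index: "U $$ (i, j) = W $$ (i, j) * complex_of_real (1 / \<sigma> j)" if "i < p" "j < p" for i j
    unfolding U_def D_def using that carrier_W by (simp add: mat_diag_mult_right)
  have "mat_adjoint U * U = D * (mat_adjoint W * W) * D"
    unfolding U_def using mat_adjoint_mult_conj[OF carrier_W D, of "1\<^sub>m p"] carrier_W D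
    by (simp add: D_def)
  also have "\<dots> = mat_diag p (\<lambda>j. complex_of_real ((1 / \<sigma> j) * (\<sigma> j)\<^sup>2 * (1 / \<sigma> j)))"
    unfolding orthogonal_cols_W D_def by simp
  finally have "U * (mat_adjoint U * U) = mat p p (\<lambda>(i, j). U $$ (i, j) * complex_of_real ((1 / \<sigma> j) * (\<sigma> j)\<^sup>2 * (1 / \<sigma> j)))"
    using mat_diag_mult_right[OF U] by simp
  also have "\<dots> = U"
  proof (rule eq_matI)
    fix i j
    assume "i < dim_row U" "j < dim_col U"
    then have "i < p" "j < p"
      using U by auto
    then show "mat p p (\<lambda>(i, j). U $$ (i, j) * complex_of_real ((1 / \<sigma> j) * (\<sigma> j)\<^sup>2 * (1 / \<sigma> j))) $$ (i, j) = U $$ (i, j)"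
      by (cases "\<sigma> j = 0") (simp_all add: U_index W_eq_0 power2_eq_square)
  qed (use U in auto)
  finally have "(\<Sum>j<p. (cmod (U $$ (i, j)))\<^sup>2) \<le> 1"
    using partial_isometry_row_norm_le_1[OF U _ assms] by simp
  moreover have "(cmod (U $$ (i, j)))\<^sup>2 = (cmod (W $$ (i, j)))\<^sup>2 / (\<sigma> j)\<^sup>2" if "j < p" for j
    using assms that by (simp add: U_index norm_divide power_divide)
  ultimately show ?thesis
    by simp
qed

definition weight :: "nat \<Rightarrow> nat \<Rightarrow> real" where
  "weight k j = (\<Sum>i<k. (cmod (W $$ (i, j)))\<^sup>2 / (\<sigma> j)\<^sup>2 + (cmod (V $$ (i, j)))\<^sup>2) / 2"

lemma Re_partial_col_le_weight:
  assumes "k \<le> p" "j < p"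
  shows "Re (\<Sum>i<k. W $$ (i, j) * cnj (V $$ (i, j))) \<le> \<sigma> j * weight k j"
proof -
  have "Re (W $$ (i, j) * cnj (V $$ (i, j)))
      \<le> \<sigma> j * (((cmod (W $$ (i, j)))\<^sup>2 / (\<sigma> j)\<^sup>2 + (cmod (V $$ (i, j)))\<^sup>2) / 2)" if "i < k" for i
  proof (cases "\<sigma> j = 0")
    case True
    then show ?thesis
      using W_eq_0 that assms by simp
  next
    case False
    then have "0 < \<sigma> j"
      using nonneg_\<sigma>[OF assms(2)] by simp
    have "Re (W $$ (i, j) * cnj (V $$ (i, j))) \<le> cmod (W $$ (i, j)) * cmod (V $$ (i, j))"
      using complex_Re_le_cmod[of "W $$ (i, j) * cnj (V $$ (i, j))"] by (simp add: norm_mult)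
    also have "\<dots> = \<sigma> j * ((cmod (W $$ (i, j)) / \<sigma> j) * cmod (V $$ (i, j)))"
      using \<open>0 < \<sigma> j\<close> by simp
    also have "\<dots> \<le> \<sigma> j * (((cmod (W $$ (i, j)) / \<sigma> j)\<^sup>2 + (cmod (V $$ (i, j)))\<^sup>2) / 2)"
    proof (rule mult_left_mono)
      show "cmod (W $$ (i, j)) / \<sigma> j * cmod (V $$ (i, j))
          \<le> ((cmod (W $$ (i, j)) / \<sigma> j)\<^sup>2 + (cmod (V $$ (i, j)))\<^sup>2) / 2"
        using sum_squares_bound[of "cmod (W $$ (i, j)) / \<sigma> j" "cmod (V $$ (i, j))"]
        by (simp add: field_simps)
    qed (use \<open>0 < \<sigma> j\<close> in simp)
    finally show ?thesis
      by (simp add: power_divide)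
  qed
  then have "Re (\<Sum>i<k. W $$ (i, j) * cnj (V $$ (i, j)))
      \<le> (\<Sum>i<k. \<sigma> j * (((cmod (W $$ (i, j)))\<^sup>2 / (\<sigma> j)\<^sup>2 + (cmod (V $$ (i, j)))\<^sup>2) / 2))"
    unfolding Re_sum by (intro sum_mono) simp
  also have "\<dots> = \<sigma> j * weight k j"
    unfolding weight_def by (simp only: sum_distrib_left sum_divide_distrib)
  finally show ?thesis .
qed

lemma weight_bounds:
  assumes "k \<le> p" "j < p"
  shows "0 \<le> weight k j" "weight k j \<le> 1"
proof -
  have weight_split: "weight k j = ((\<Sum>i<k. (cmod (W $$ (i, j)))\<^sup>2) / (\<sigma> j)\<^sup>2 + (\<Sum>i<k. (cmod (V $$ (i, j)))\<^sup>2)) / 2"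
    unfolding weight_def by (simp only: sum.distrib sum_divide_distrib)
  have "(\<Sum>i<k. (cmod (W $$ (i, j)))\<^sup>2) \<le> (\<sigma> j)\<^sup>2"
    using sum_mono2[of "{..<p}" "{..<k}" "\<lambda>i. (cmod (W $$ (i, j)))\<^sup>2"] assms col_norm_W by simp
  then have "(\<Sum>i<k. (cmod (W $$ (i, j)))\<^sup>2) / (\<sigma> j)\<^sup>2 \<le> 1"
    by (cases "\<sigma> j = 0") simp_all
  moreover have "(\<Sum>i<k. (cmod (V $$ (i, j)))\<^sup>2) \<le> 1"
    using sum_mono2[of "{..<p}" "{..<k}" "\<lambda>i. (cmod (V $$ (i, j)))\<^sup>2"] assms unitary_mat_col_norm[OF unitary_V] by simp
  ultimately show "weight k j \<le> 1"
    unfolding weight_split by simp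
  show "0 \<le> weight k j"
    unfolding weight_def by (simp add: sum_nonneg)
qed

lemma sum_weight_le:
  assumes "k \<le> p"
  shows "(\<Sum>j<p. weight k j) \<le> real k"
proof -
  have "(\<Sum>j<p. weight k j) = (\<Sum>i<k. \<Sum>j<p. (cmod (W $$ (i, j)))\<^sup>2 / (\<sigma> j)\<^sup>2 + (cmod (V $$ (i, j)))\<^sup>2) / 2"
    unfolding weight_def by (simp only: sum_divide_distrib[symmetric] sum.swap[of _ "{..<p}"])
  also have "\<dots> \<le> (\<Sum>i<k. 1 + 1) / 2"
  proof (intro divide_right_mono sum_mono)
    fix i
    assume "i \<in> {..<k}"
    then have "i < p"
      using assms by simp
    then show "(\<Sum>j<p. (cmod (W $$ (i, j)))\<^sup>2 / (\<sigma> j)\<^sup>2 + (cmod (V $$ (i, j)))\<^sup>2) \<le> 1 + 1"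
      unfolding sum.distrib using row_norm_W_scaled_le_1 unitary_mat_row_norm[OF unitary_V]
      by (intro add_mono) simp_all
  qed simp
  finally show ?thesis
    by simp
qed

lemma Re_partial_trace_le:
  assumes "k \<le> p"
  shows "Re (\<Sum>i<k. (W * mat_adjoint V) $$ (i, i)) \<le> (\<Sum>i<k. rev (sort (map \<sigma> [0..<p])) ! i)"
proof -
  have "(\<Sum>i<k. (W * mat_adjoint V) $$ (i, i)) = (\<Sum>i<k. \<Sum>j<p. W $$ (i, j) * cnj (V $$ (i, j)))"
    using assms by (intro sum.cong) (simp_all add: diag_W_adjoint_V)
  then have "Re (\<Sum>i<k. (W * mat_adjoint V) $$ (i, i)) = (\<Sum>j<p. Re (\<Sum>i<k. W $$ (i, j) * cnj (V $$ (i, j))))"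
    by (simp only: sum.swap[of _ "{..<k}"] Re_sum)
  also have "\<dots> \<le> (\<Sum>j<p. \<sigma> j * weight k j)"
    using assms Re_partial_col_le_weight by (intro sum_mono) auto
  also have "\<dots> = (\<Sum>j<length (map \<sigma> [0..<p]). map \<sigma> [0..<p] ! j * weight k j)"
    by simp
  also have "\<dots> \<le> (\<Sum>i<k. rev (sort (map \<sigma> [0..<p])) ! i)"
    using assms nonneg_\<sigma> weight_bounds sum_weight_le
    by (intro weighted_sum_le_sum_largest) auto
  finally show ?thesis .
qed

lemma psd_if_Re_trace_eq:
  assumes "Re (\<Sum>i<p. (W * mat_adjoint V) $$ (i, i)) = (\<Sum>j<p. \<sigma> j)"
  shows "psd_mat p (W * mat_adjoint V)"
proof -
  define t where "t j = Re (\<Sum>i<p. W $$ (i, j) * cnj (V $$ (i, j)))" for j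
  have t_le: "t j \<le> \<sigma> j" if "j < p" for j
    unfolding t_def using that col_norm_W unitary_mat_col_norm[OF unitary_V] nonneg_\<sigma> by (intro Re_sum_mult_cnj_le) auto
  have "(\<Sum>j<p. t j) = Re (\<Sum>j<p. \<Sum>i<p. W $$ (i, j) * cnj (V $$ (i, j)))"
    unfolding t_def by (simp only: Re_sum)
  also have "\<dots> = Re (\<Sum>i<p. \<Sum>j<p. W $$ (i, j) * cnj (V $$ (i, j)))"
    by (subst sum.swap) (rule refl)
  also have "\<dots> = Re (\<Sum>i<p. (W * mat_adjoint V) $$ (i, i))"
    by (simp add: diag_W_adjoint_V)
  finally have "(\<Sum>j<p. t j) = (\<Sum>j<p. \<sigma> j)"
    unfolding assms .
  then have "\<forall>j\<in>{..<p}. \<sigma> j - t j = 0"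
    using t_le by (subst sum_nonneg_eq_0_iff[symmetric]) (auto simp: sum_subtractf)
  then have "W $$ (i, j) = complex_of_real (\<sigma> j) * V $$ (i, j)" if "i < p" "j < p" for i j
    using that col_norm_W unitary_mat_col_norm[OF unitary_V] unfolding t_def by (intro Re_sum_mult_cnj_eqD) auto
  then have "W = V * mat_diag p (\<lambda>j. complex_of_real (\<sigma> j))"
    using carrier_W unitary_matD(1)[OF unitary_V] by (intro eq_matI) (auto simp: mat_diag_mult_right)
  then show ?thesis
    using psd_mat_conj_diag[OF unitary_matD(1)[OF unitary_V] nonneg_\<sigma>] by simp
qed

end

lemma exists_column_svd:
  fixes R :: "complex mat"
  assumes R: "R \<in> carrier_mat p p"
  obtains V \<sigma> where "column_svd p (R * V) V \<sigma>" "singular_values R = rev (sort (map \<sigma> [0..<p]))"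
proof -
  define A where "A = mat_adjoint R * R"
  have A: "A \<in> carrier_mat p p" "mat_adjoint A = A"
    unfolding A_def using mult_carrier_mat[OF mat_adjoint_carrier[OF R] R]
      mat_adjoint_mult[of "mat_adjoint R" p p R p] R by simp_all
  obtain es where es: "char_poly A = (\<Prod>e\<leftarrow>es. [:- e, 1:])" "length es = p"
    using char_poly_factorized[OF A(1)] by blast
  obtain V where V: "unitary_mat p V" and VAV: "mat_adjoint V * A * V = mat_diag p (\<lambda>i. es ! i)"
    using hermitian_unitary_diagonalization[OF A es(1)] by blast
  have V_carrier: "V \<in> carrier_mat p p"
    using V by (simp add: unitary_matD)
  define W where "W = R * V"
  have W: "W \<in> carrier_mat p p"
    unfolding W_def using mult_carrier_mat[OF R V_carrier] .
  have WW: "mat_adjoint W * W = mat_diag p (\<lambda>i. es ! i)"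
    using mat_adjoint_mult_conj[OF R V_carrier, of "1\<^sub>m p"] R V_carrier VAV
    unfolding W_def A_def by simp
  have es_nth: "es ! j = complex_of_real (\<Sum>i<p. (cmod (W $$ (i, j)))\<^sup>2)" if "j < p" for j
    using diag_mat_adjoint_mult[OF W that] WW that by (simp add: mat_diag_def del: of_real_sum of_real_power)
  define \<sigma> where "\<sigma> j = sqrt (Re (es ! j))" for j
  have \<sigma>: "0 \<le> \<sigma> j" "es ! j = complex_of_real ((\<sigma> j)\<^sup>2)" if "j < p" for j
    unfolding \<sigma>_def es_nth[OF that] by (simp_all add: sum_nonneg)
  have "mat_diag p (\<lambda>i. es ! i) = mat_diag p (\<lambda>j. complex_of_real ((\<sigma> j)\<^sup>2))"
    using \<sigma>(2) by (intro eq_matI) (auto simp: mat_diag_def)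
  with V W WW \<sigma>(1) have "column_svd p W V \<sigma>"
    unfolding column_svd_def by simp
  moreover have "map (\<lambda>z. sqrt (Re z)) es = map \<sigma> [0..<p]"
    unfolding \<sigma>_def using es(2) by (intro nth_equalityI) simp_all
  then have "singular_values R = rev (sort (map \<sigma> [0..<p]))"
    unfolding singular_values_def A_def[symmetric] es(1) proots_linear_factors
    by (metis mset_map sorted_list_of_multiset_mset)
  ultimately show ?thesis
    using that unfolding W_def by blast
qed

lemma unitary_mat_mult_mult_adjoint:
  assumes "R \<in> carrier_mat n n" "unitary_mat n V"
  shows "R * V * mat_adjoint V = R"
  using assms assoc_mult_mat[of R n n V n "mat_adjoint V" n] by (simp add: unitary_matD)

theorem Re_partial_trace_le_sum_singular_values:
  fixes R :: "complex mat"
  assumes "R \<in> carrier_mat p p" "k \<le> p"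
  shows "Re (\<Sum>i<k. R $$ (i, i)) \<le> (\<Sum>i<k. singular_values R ! i)"
proof -
  obtain V \<sigma> where svd: "column_svd p (R * V) V \<sigma>"
    and sv: "singular_values R = rev (sort (map \<sigma> [0..<p]))"
    using exists_column_svd[OF assms(1)] .
  have "R * V * mat_adjoint V = R"
    using assms(1) column_svd.unitary_V[OF svd] by (rule unitary_mat_mult_mult_adjoint)
  then show ?thesis
    using column_svd.Re_partial_trace_le[OF svd assms(2)] unfolding sv by simp
qed

theorem psd_if_Re_trace_eq_sum_singular_values:
  fixes R :: "complex mat"
  assumes "R \<in> carrier_mat p p" "Re (\<Sum>i<p. R $$ (i, i)) = (\<Sum>i<p. singular_values R ! i)"
  shows "psd_mat p R"
proof -
  obtain V \<sigma> where svd: "column_svd p (R * V) V \<sigma>"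
    and sv: "singular_values R = rev (sort (map \<sigma> [0..<p]))"
    using exists_column_svd[OF assms(1)] .
  have R: "R * V * mat_adjoint V = R"
    using assms(1) column_svd.unitary_V[OF svd] by (rule unitary_mat_mult_mult_adjoint)
  have "(\<Sum>i<p. singular_values R ! i) = (\<Sum>j<p. \<sigma> j)"
    using sum_nth_eq_if_mset_eq[of "rev (sort (map \<sigma> [0..<p]))" "map \<sigma> [0..<p]" id] unfolding sv by simp
  with assms(2) have "Re (\<Sum>i<p. (R * V * mat_adjoint V) $$ (i, i)) = (\<Sum>j<p. \<sigma> j)"
    unfolding R by simp
  from column_svd.psd_if_Re_trace_eq[OF svd this] show ?thesis
    unfolding R .
qed

theorem lemma3p3:
  fixes p :: nat and c :: "nat \<Rightarrow> real" and R :: "complex mat"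
  assumes "\<And>i j. i \<le> j \<Longrightarrow> j < p \<Longrightarrow> c j \<le> c i"
    and "\<And>j. j < p \<Longrightarrow> c j > 0"
    and "R \<in> carrier_mat p p"
    and "complex_of_real (c_norm p c R) = mat_trace (diagC p c * R)"
  shows "psd_mat p R"
proof -
  define x where "x i = singular_values R ! i - Re (R $$ (i, i))" for i
  have partial_sums: "0 \<le> (\<Sum>i<k. x i)" if "k \<le> p" for k
    using Re_partial_trace_le_sum_singular_values[OF assms(3) that]
    unfolding x_def by (simp add: sum_subtractf)
  have "mat_trace (diagC p c * R) = (\<Sum>i<p. complex_of_real (c i) * R $$ (i, i))"
    unfolding mat_trace_def diagC_def using assms(3) by (simp add: mat_diag_mult_left)
  then have weighted_sum: "(\<Sum>i<p. c i * x i) = 0"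
    using arg_cong[OF assms(4), of Re] unfolding x_def c_norm_def
    by (simp add: right_diff_distrib sum_subtractf)
  have "(\<Sum>i<p. x i) = 0"
    using assms(1,2) partial_sums weighted_sum by (rule sum_eq_0_if_weighted_sum_eq_0)
  then show ?thesis
    using assms(3) unfolding x_def
    by (intro psd_if_Re_trace_eq_sum_singular_values) (simp_all add: sum_subtractf)
qed

end
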